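(* Let $n\in\mathbb{N}$, let $p,q:\mathbb{R}^n\to\mathbb{R}$ be polynomials, let $\epsilon>0$, and let $a_j,b_j\in\mathbb{R}$ with $a_j<b_j$ for $j\in\{1,\dots,n\}$. Set $\Omega:=[a_1,b_1]\times[a_2,b_2]\times\dots\times[a_n,b_n]$ and assume that $\min_\Omega|q|>0$. Then \[ \left|\min_{\Omega,\epsilon}\frac{p}{q}-\min_\Omega\frac{p}{q}\right|\leq\frac{\epsilon}{\min_\Omega q^2},\qquad \left|\max_{\Omega,\epsilon}\frac{p}{q}-\max_\Omega\frac{p}{q}\right|\leq\frac{\epsilon}{\min_\Omega q^2}, \] and \[ \left|\left\|\frac{p}{q}\right\|_{L^\infty(\Omega,\epsilon)}-\left\|\frac{p}{q}\right\|_{L^\infty(\Omega)}\right|\leq\frac{\epsilon}{\min_\Omega q^2}. \]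
   Context: Chebyshev polynomials $T_m$ are defined by $T_m(\cos z)=\cos(mz)$. For a polynomial $P:\mathbb{C}^n\to\mathbb{C}$ written as $P(x^1,\dots,x^n)=\sum_{j_1,\dots,j_n} c_{j_1\dots j_n}T_{j_1}(x^1)\cdots T_{j_n}(x^n)$, its T-norm on $[-1,1]^n$ is $\sum|c_{j_1\dots j_n}|$; on a box $[a_1,b_1]\times\dots\times[a_n,b_n]$ the T-norm $\|P\|_{T(\cdot)}$ is the T-norm on $[-1,1]^n$ of $P$ composed with the affine maps $x\mapsto \frac{b_j-a_j}{2}x+\frac{a_j+b_j}{2}$ in each variable. With $\Omega$, $p$, $q$, $\epsilon$ as in the claim, set for $j\in\{1,\dots,n\}$ \[ M_j:=\min\left\{m\in\mathbb{N}: m\geq\frac{n}{\epsilon}(b_j-a_j)\|\partial_jp\,q-p\,\partial_jq\|_{T(\Omega)}\right\} \] and the grid \[ \Lambda:=\left\{\left(a_1+\tfrac{b_1-a_1}{M_1}k_1,\dots,a_n+\tfrac{b_n-a_n}{M_n}k_n\right): k_j\in[0,M_j]\cap\mathbb{Z}\right\}. \] Then by definition $\max_{\Omega,\epsilon}\frac{p}{q}:=\max_\Lambda\frac{p}{q}$, $\min_{\Omega,\epsilon}\frac{p}{q}:=\min_\Lambda\frac{p}{q}$, and $\left\|\frac{p}{q}\right\|_{L^\infty(\Omega,\epsilon)}:=\max_\Lambda\left|\frac{p}{q}\right|$. *)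

theory Defs
  imports "HOL-Analysis.Analysis"
begin

fun cheb :: "nat \<Rightarrow> real \<Rightarrow> real" where
  "cheb 0 x = 1"
| "cheb (Suc 0) x = x"
| "cheb (Suc (Suc m)) x = 2 * x * cheb (Suc m) x - cheb m x"

text \<open>Real polynomials on R^n (n = CARD('n)): finite linear combinations of monomials.\<close>
definition is_mpoly :: "(real^'n \<Rightarrow> real) \<Rightarrow> bool" where
  "is_mpoly f \<longleftrightarrow> (\<exists>A c. finite (A :: ('n \<Rightarrow> nat) set) \<and>
      (\<forall>x. f x = (\<Sum>\<alpha>\<in>A. c \<alpha> * (\<Prod>i\<in>UNIV. (x$i) ^ (\<alpha> i)))))"

definition partial :: "'n \<Rightarrow> (real^'n \<Rightarrow> real) \<Rightarrow> real^'n \<Rightarrow> real" where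
  "partial j f x = deriv (\<lambda>t. f (\<chi> i. if i = j then t else x$i)) (x$j)"

text \<open>T-norm on the box [a,b]: sum of absolute values of the Chebyshev coefficients of
  f composed with the coordinatewise affine maps from [-1,1] to [a_j,b_j].\<close>
definition tnorm :: "real^'n \<Rightarrow> real^'n \<Rightarrow> (real^'n \<Rightarrow> real) \<Rightarrow> real" where
  "tnorm a b f = (THE s. \<exists>A d. finite (A :: ('n \<Rightarrow> nat) set) \<and>
      (\<forall>x. f (\<chi> i. (b$i - a$i) / 2 * x$i + (a$i + b$i) / 2)
            = (\<Sum>\<alpha>\<in>A. d \<alpha> * (\<Prod>i\<in>UNIV. cheb (\<alpha> i) (x$i)))) \<and>
      s = (\<Sum>\<alpha>\<in>A. \<bar>d \<alpha>\<bar>))"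

text \<open>Number of grid subintervals in direction j (\<nat> read as positive integers).\<close>
definition gridM :: "real^'n \<Rightarrow> real^'n \<Rightarrow> real \<Rightarrow> (real^'n \<Rightarrow> real) \<Rightarrow> (real^'n \<Rightarrow> real)
      \<Rightarrow> 'n \<Rightarrow> nat" where
  "gridM a b eps p q j = (LEAST m::nat. 1 \<le> m \<and>
      real m \<ge> real CARD('n) / eps * (b$j - a$j) *
        tnorm a b (\<lambda>x. partial j p x * q x - p x * partial j q x))"

definition grid :: "real^'n \<Rightarrow> real^'n \<Rightarrow> real \<Rightarrow> (real^'n \<Rightarrow> real) \<Rightarrow> (real^'n \<Rightarrow> real)
      \<Rightarrow> (real^'n) set" where
  "grid a b eps p q = {x. \<exists>k :: 'n \<Rightarrow> nat. (\<forall>j. k j \<le> gridM a b eps p q j) \<and>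
      x = (\<chi> j. a$j + (b$j - a$j) / real (gridM a b eps p q j) * real (k j))}"

definition max_eps :: "real^'n \<Rightarrow> real^'n \<Rightarrow> real \<Rightarrow> (real^'n \<Rightarrow> real) \<Rightarrow> (real^'n \<Rightarrow> real) \<Rightarrow> real" where
  "max_eps a b eps p q = Max ((\<lambda>x. p x / q x) ` grid a b eps p q)"

definition min_eps :: "real^'n \<Rightarrow> real^'n \<Rightarrow> real \<Rightarrow> (real^'n \<Rightarrow> real) \<Rightarrow> (real^'n \<Rightarrow> real) \<Rightarrow> real" where
  "min_eps a b eps p q = Min ((\<lambda>x. p x / q x) ` grid a b eps p q)"

definition linf_eps :: "real^'n \<Rightarrow> real^'n \<Rightarrow> real \<Rightarrow> (real^'n \<Rightarrow> real) \<Rightarrow> (real^'n \<Rightarrow> real) \<Rightarrow> real" where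
  "linf_eps a b eps p q = Max ((\<lambda>x. \<bar>p x / q x\<bar>) ` grid a b eps p q)"

end

theory Submission
  imports Defs "HOL-Computational_Algebra.Polynomial"
begin

text \<open>Write F_j for the numerator of the j-th partial derivative of p/q. By the mean value
  theorem, p/q changes between a point x of the box and a point y by at most
  sum_j |x_j - y_j| sup |F_j| / min q^2. Every point of the box lies within (b_j - a_j)/M_j of a
  grid point in each coordinate, and sup |F_j| is bounded by the T-norm of F_j because products of
  Chebyshev polynomials are bounded by 1 on the cube; the choice of M_j makes every summand at most
  eps/(n min q^2). Hence the values on the grid are eps/min q^2-dense in the values on the box,
  which gives all three estimates.

  The T-norm is only meaningful because every polynomial, composed with an affine map, has a
  Chebyshev expansion (multiplication by a coordinate acts on Chebyshev products through
  x T_(m+1) = (T_(m+2) + T_m)/2) and this expansion is unique: products of Chebyshev polynomials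
  are linearly independent, by induction on the number of variables, starting from the
  one-variable case where T_m has degree exactly m.\<close>

section \<open>Finite linear combinations\<close>

definition fun_span :: "('i \<Rightarrow> 'a \<Rightarrow> real) \<Rightarrow> ('a \<Rightarrow> real) set" where
  "fun_span B = {f. \<exists>A d. finite A \<and> (\<forall>x. f x = (\<Sum>\<alpha>\<in>A. d \<alpha> * B \<alpha> x))}"

lemma fun_spanI: "finite A \<Longrightarrow> (\<And>x. f x = (\<Sum>\<alpha>\<in>A. d \<alpha> * B \<alpha> x)) \<Longrightarrow> f \<in> fun_span B"
  unfolding fun_span_def by blast

lemma fun_spanE:
  assumes "f \<in> fun_span B"
  obtains A d where "finite A" "\<And>x. f x = (\<Sum>\<alpha>\<in>A. d \<alpha> * B \<alpha> x)"
  using assms unfolding fun_span_def by blast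

lemma fun_span_basis: "(\<lambda>x. c * B \<alpha> x) \<in> fun_span B"
  by (rule fun_spanI[of "{\<alpha>}" _ "\<lambda>_. c"]) auto

lemma fun_span_scale: "f \<in> fun_span B \<Longrightarrow> (\<lambda>x. c * f x) \<in> fun_span B"
  by (erule fun_spanE, rule fun_spanI[where d = "\<lambda>\<alpha>. c * _ \<alpha>"])
     (simp_all add: sum_distrib_left mult.assoc)

lemma sum_zero_extend:
  "finite C \<Longrightarrow> A \<subseteq> C \<Longrightarrow> sum g A = (\<Sum>x\<in>C. if x \<in> A then g x else 0)"
  by (simp add: sum.inter_restrict[symmetric] Int_absorb1)

lemma fun_span_add:
  assumes "f \<in> fun_span B" "g \<in> fun_span B"
  shows "(\<lambda>x. f x + g x) \<in> fun_span B"
proof -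
  obtain A d where A: "finite A" "\<And>x. f x = (\<Sum>\<alpha>\<in>A. d \<alpha> * B \<alpha> x)"
    using assms(1) unfolding fun_span_def by blast
  obtain A' d' where A': "finite A'" "\<And>x. g x = (\<Sum>\<alpha>\<in>A'. d' \<alpha> * B \<alpha> x)"
    using assms(2) unfolding fun_span_def by blast
  let ?e = "\<lambda>\<alpha>. (if \<alpha> \<in> A then d \<alpha> else 0) + (if \<alpha> \<in> A' then d' \<alpha> else 0)"
  show ?thesis
  proof (rule fun_spanI[of "A \<union> A'" _ ?e])
    fix x
    have f: "f x = (\<Sum>\<alpha>\<in>A \<union> A'. if \<alpha> \<in> A then d \<alpha> * B \<alpha> x else 0)"
      unfolding A(2) using A(1) A'(1) by (intro sum_zero_extend) auto
    have g: "g x = (\<Sum>\<alpha>\<in>A \<union> A'. if \<alpha> \<in> A' then d' \<alpha> * B \<alpha> x else 0)"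
      unfolding A'(2) using A(1) A'(1) by (intro sum_zero_extend) auto
    show "f x + g x = (\<Sum>\<alpha>\<in>A \<union> A'. ?e \<alpha> * B \<alpha> x)"
      unfolding f g sum.distrib[symmetric] by (intro sum.cong) (auto simp: distrib_right)
  qed (use A A' in simp)
qed

lemma fun_span_diff: "f \<in> fun_span B \<Longrightarrow> g \<in> fun_span B \<Longrightarrow> (\<lambda>x. f x - g x) \<in> fun_span B"
  using fun_span_add[OF _ fun_span_scale[of g B "-1"], of f] by simp

lemma fun_span_sum:
  "finite S \<Longrightarrow> (\<And>s. s \<in> S \<Longrightarrow> f s \<in> fun_span B) \<Longrightarrow> (\<lambda>x. \<Sum>s\<in>S. f s x) \<in> fun_span B"
proof (induction S rule: finite_induct)
  case empty
  show ?case by (rule fun_spanI[of "{}"]) simp_all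
next
  case (insert s S)
  then show ?case by (simp add: fun_span_add)
qed

section \<open>Chebyshev polynomials\<close>

lemma cheb_cos: "cheb m (cos z) = cos (real m * z)"
proof (induction m "cos z" rule: cheb.induct)
  case (3 m)
  have "cos (real (Suc (Suc m)) * z) + cos (real m * z) = 2 * cos z * cos (real (Suc m) * z)"
    using cos_add[of "real (Suc m) * z" z] cos_diff[of "real (Suc m) * z" z]
    by (simp add: algebra_simps)
  with 3 show ?case by simp
qed simp_all

lemma abs_cheb_le_1: "\<bar>u\<bar> \<le> 1 \<Longrightarrow> \<bar>cheb m u\<bar> \<le> 1"
  using cheb_cos[of m "arccos u"] by (simp add: cos_arccos_abs)

lemma x_mult_cheb_Suc: "x * cheb (Suc m) x = (cheb (Suc (Suc m)) x + cheb m x) / 2"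
  by simp

fun chebp :: "nat \<Rightarrow> real poly" where
  "chebp 0 = 1"
| "chebp (Suc 0) = [:0, 1:]"
| "chebp (Suc (Suc m)) = smult 2 (pCons 0 (chebp (Suc m))) - chebp m"

lemma poly_chebp: "poly (chebp m) x = cheb m x"
  by (induction m rule: chebp.induct) (simp_all add: algebra_simps)

lemma coeff_chebp: "1 \<le> coeff (chebp m) m" "m < k \<Longrightarrow> coeff (chebp m) k = 0"
proof -
  have "1 \<le> coeff (chebp m) m \<and> (\<forall>k>m. coeff (chebp m) k = 0)"
  proof (induction m rule: chebp.induct)
    case (3 m)
    have "coeff (chebp (Suc (Suc m))) (Suc k) = 2 * coeff (chebp (Suc m)) k - coeff (chebp m) (Suc k)"
      for k
      by (simp add: coeff_pCons)
    with 3 show ?case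
      by (auto simp: gr0_conv_Suc coeff_pCons split: nat.splits)
  qed (auto simp: coeff_1 coeff_pCons split: nat.splits)
  then show "1 \<le> coeff (chebp m) m" "m < k \<Longrightarrow> coeff (chebp m) k = 0" by auto
qed

lemma cheb_lin_indep:
  assumes M: "finite M" and zero: "\<And>t. (\<Sum>m\<in>M. g m * cheb m t) = 0" and "m \<in> M"
  shows "g m = 0"
proof (rule ccontr)
  assume "g m \<noteq> 0"
  define m0 where "m0 = Max {m\<in>M. g m \<noteq> 0}"
  have fin: "finite {m\<in>M. g m \<noteq> 0}" "{m\<in>M. g m \<noteq> 0} \<noteq> {}" using M \<open>m \<in> M\<close> \<open>g m \<noteq> 0\<close> by auto
  have m0: "m0 \<in> M" "g m0 \<noteq> 0" using Max_in[OF fin] by (auto simp: m0_def)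
  have below: "k \<in> M \<Longrightarrow> g k \<noteq> 0 \<Longrightarrow> k \<le> m0" for k
    using Max_ge[OF fin(1)] by (auto simp: m0_def)
  define P where "P = (\<Sum>m\<in>M. smult (g m) (chebp m))"
  have "poly P = (\<lambda>_. 0)" using zero by (simp add: P_def poly_sum poly_chebp fun_eq_iff)
  then have "P = 0" using poly_all_0_iff_0 by metis
  then have "0 = coeff P m0" by simp
  also have "\<dots> = (\<Sum>k\<in>M. g k * coeff (chebp k) m0)" by (simp add: P_def coeff_sum)
  also have "\<dots> = g m0 * coeff (chebp m0) m0"
  proof -
    have "g k * coeff (chebp k) m0 = 0" if "k \<in> M - {m0}" for k
      using that below[of k] coeff_chebp(2)[of k m0] by (cases "g k = 0") auto
    then show ?thesis by (simp add: sum.remove[OF M m0(1)] sum.neutral)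
  qed
  finally show False using m0(2) coeff_chebp(1)[of m0] by simp
qed

section \<open>Products of Chebyshev polynomials and the T-norm\<close>

definition cheb_prod :: "('n \<Rightarrow> nat) \<Rightarrow> real^'n \<Rightarrow> real" where
  "cheb_prod \<alpha> x = (\<Prod>i\<in>UNIV. cheb (\<alpha> i) (x$i))"

lemma cheb_prod_partial_lin_indep:
  fixes C :: "('n::finite \<Rightarrow> nat) set"
  assumes "finite I" "finite C" "\<And>x::real^'n. (\<Sum>\<alpha>\<in>C. c \<alpha> * (\<Prod>i\<in>I. cheb (\<alpha> i) (x$i))) = 0"
    and "\<alpha> \<in> C"
  shows "(\<Sum>\<beta>\<in>{\<beta>\<in>C. \<forall>i\<in>I. \<beta> i = \<alpha> i}. c \<beta>) = 0"
  using assms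
proof (induction I arbitrary: C c \<alpha> rule: finite_induct)
  case empty
  then show ?case by simp
next
  case (insert j I)
  define G where "G m x = (\<Sum>\<beta>\<in>{\<beta>\<in>C. \<beta> j = m}. c \<beta> * (\<Prod>i\<in>I. cheb (\<beta> i) (x$i)))"
    for m and x :: "real^'n"
  have G_sum: "(\<Sum>m\<in>(\<lambda>\<beta>. \<beta> j) ` C. G m x * cheb m (x$j)) = 0" for x
  proof -
    have "G m x * cheb m (x$j) = (\<Sum>\<beta>\<in>{\<beta>\<in>C. \<beta> j = m}. c \<beta> * (\<Prod>i\<in>insert j I. cheb (\<beta> i) (x$i)))"
      for m
      unfolding G_def sum_distrib_right using insert.hyps by (intro sum.cong) (auto simp: mult_ac)
    then have "(\<Sum>m\<in>(\<lambda>\<beta>. \<beta> j) ` C. G m x * cheb m (x$j))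
        = (\<Sum>m\<in>(\<lambda>\<beta>. \<beta> j) ` C. \<Sum>\<beta>\<in>{\<beta>\<in>C. \<beta> j = m}. c \<beta> * (\<Prod>i\<in>insert j I. cheb (\<beta> i) (x$i)))"
      by simp
    also have "\<dots> = (\<Sum>\<beta>\<in>C. c \<beta> * (\<Prod>i\<in>insert j I. cheb (\<beta> i) (x$i)))"
      by (rule sum.image_gen[symmetric, OF insert.prems(1)])
    also have "\<dots> = 0"
      by (rule insert.prems(2))
    finally show ?thesis .
  qed
  \<comment> \<open>\<open>G m x\<close> does not depend on \<open>x$j\<close>, so \<open>G_sum\<close> is a vanishing Chebyshev series in \<open>x$j\<close>.\<close>
  have G_upd: "G m (\<chi> i. if i = j then t else x$i) = G m x" for m t x
    using insert.hyps unfolding G_def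
    by (intro sum.cong refl arg_cong2[where f = "(*)"] prod.cong) auto
  have "G (\<alpha> j) x = 0" for x
  proof (rule cheb_lin_indep[where g = "\<lambda>m. G m x"])
    fix t
    show "(\<Sum>m\<in>(\<lambda>\<beta>. \<beta> j) ` C. G m x * cheb m t) = 0"
      using G_sum[of "\<chi> i. if i = j then t else x$i"] by (simp add: G_upd)
  qed (use insert.prems in auto)
  then have "(\<Sum>\<beta>\<in>{\<beta>\<in>{\<beta>\<in>C. \<beta> j = \<alpha> j}. \<forall>i\<in>I. \<beta> i = \<alpha> i}. c \<beta>) = 0"
    using insert.prems by (intro insert.IH) (auto simp: G_def)
  moreover have "{\<beta>\<in>{\<beta>\<in>C. \<beta> j = \<alpha> j}. \<forall>i\<in>I. \<beta> i = \<alpha> i} = {\<beta>\<in>C. \<forall>i\<in>insert j I. \<beta> i = \<alpha> i}"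
    by auto
  ultimately show ?case by simp
qed

lemma cheb_prod_lin_indep:
  assumes "finite C" "\<And>x. (\<Sum>\<beta>\<in>C. c \<beta> * cheb_prod \<beta> x) = 0" "\<alpha> \<in> C"
  shows "c \<alpha> = 0"
proof -
  have "{\<beta>\<in>C. \<forall>i\<in>UNIV. \<beta> i = \<alpha> i} = {\<alpha>}" using assms(3) by (auto simp: fun_eq_iff)
  then show ?thesis
    using cheb_prod_partial_lin_indep[of UNIV C c \<alpha>] assms by (simp add: cheb_prod_def)
qed

lemma cheb_coeffs_abs_sum_unique:
  assumes A: "finite A" "finite A'"
    and eq: "\<And>x. (\<Sum>\<alpha>\<in>A. d \<alpha> * cheb_prod \<alpha> x) = (\<Sum>\<alpha>\<in>A'. d' \<alpha> * cheb_prod \<alpha> x)"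
  shows "(\<Sum>\<alpha>\<in>A. \<bar>d \<alpha>\<bar>) = (\<Sum>\<alpha>\<in>A'. \<bar>d' \<alpha>\<bar>)"
proof -
  define e where "e \<alpha> = (if \<alpha> \<in> A then d \<alpha> else 0)" for \<alpha>
  define e' where "e' \<alpha> = (if \<alpha> \<in> A' then d' \<alpha> else 0)" for \<alpha>
  have zero_ext: "(\<Sum>\<alpha>\<in>A. g \<alpha>) = (\<Sum>\<alpha>\<in>A \<union> A'. if \<alpha> \<in> A then g \<alpha> else 0)"
    "(\<Sum>\<alpha>\<in>A'. g \<alpha>) = (\<Sum>\<alpha>\<in>A \<union> A'. if \<alpha> \<in> A' then g \<alpha> else 0)" for g :: "_ \<Rightarrow> real"
    using A by (auto intro: sum_zero_extend)
  have "(\<Sum>\<alpha>\<in>A \<union> A'. (e \<alpha> - e' \<alpha>) * cheb_prod \<alpha> x)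
      = (\<Sum>\<alpha>\<in>A. d \<alpha> * cheb_prod \<alpha> x) - (\<Sum>\<alpha>\<in>A'. d' \<alpha> * cheb_prod \<alpha> x)" for x
    unfolding zero_ext sum_subtractf[symmetric]
    by (intro sum.cong) (auto simp: e_def e'_def left_diff_distrib)
  then have "(\<Sum>\<alpha>\<in>A \<union> A'. (e \<alpha> - e' \<alpha>) * cheb_prod \<alpha> x) = 0" for x
    using eq by simp
  then have e_eq: "e \<alpha> = e' \<alpha>" if "\<alpha> \<in> A \<union> A'" for \<alpha>
    using cheb_prod_lin_indep[of "A \<union> A'" "\<lambda>\<alpha>. e \<alpha> - e' \<alpha>"] A that by auto
  have "(if \<alpha> \<in> A then \<bar>d \<alpha>\<bar> else 0) = (if \<alpha> \<in> A' then \<bar>d' \<alpha>\<bar> else 0)" if "\<alpha> \<in> A \<union> A'" for \<alpha>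
    using e_eq[OF that] by (auto simp: e_def e'_def split: if_splits)
  then show ?thesis
    unfolding zero_ext by (intro sum.cong) auto
qed

lemma tnorm_eqI:
  assumes "finite A"
    and "\<And>x. f (\<chi> i. (b$i - a$i) / 2 * x$i + (a$i + b$i) / 2) = (\<Sum>\<alpha>\<in>A. d \<alpha> * cheb_prod \<alpha> x)"
  shows "tnorm a b f = (\<Sum>\<alpha>\<in>A. \<bar>d \<alpha>\<bar>)"
  unfolding tnorm_def
proof (rule the_equality)
  show "\<exists>A' d'. finite A' \<and> (\<forall>x. f (\<chi> i. (b$i - a$i) / 2 * x$i + (a$i + b$i) / 2)
      = (\<Sum>\<alpha>\<in>A'. d' \<alpha> * (\<Prod>i\<in>UNIV. cheb (\<alpha> i) (x$i)))) \<and> (\<Sum>\<alpha>\<in>A. \<bar>d \<alpha>\<bar>) = (\<Sum>\<alpha>\<in>A'. \<bar>d' \<alpha>\<bar>)"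
    using assms unfolding cheb_prod_def by blast
next
  fix s
  assume "\<exists>A' d'. finite A' \<and> (\<forall>x. f (\<chi> i. (b$i - a$i) / 2 * x$i + (a$i + b$i) / 2)
      = (\<Sum>\<alpha>\<in>A'. d' \<alpha> * (\<Prod>i\<in>UNIV. cheb (\<alpha> i) (x$i)))) \<and> s = (\<Sum>\<alpha>\<in>A'. \<bar>d' \<alpha>\<bar>)"
  then obtain A' d' where "finite A'" "s = (\<Sum>\<alpha>\<in>A'. \<bar>d' \<alpha>\<bar>)"
    "\<And>x. f (\<chi> i. (b$i - a$i) / 2 * x$i + (a$i + b$i) / 2) = (\<Sum>\<alpha>\<in>A'. d' \<alpha> * cheb_prod \<alpha> x)"
    unfolding cheb_prod_def by blast
  then show "s = (\<Sum>\<alpha>\<in>A. \<bar>d \<alpha>\<bar>)"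
    using cheb_coeffs_abs_sum_unique[of A' A d' d] assms by simp
qed

lemma abs_le_tnorm:
  assumes "(\<lambda>x. f (\<chi> i. (b$i - a$i) / 2 * x$i + (a$i + b$i) / 2)) \<in> fun_span cheb_prod"
    and "\<forall>i. a$i < b$i" and "x \<in> cbox a b"
  shows "\<bar>f x\<bar> \<le> tnorm a b f"
proof -
  obtain A d where A: "finite A"
    "\<And>x. f (\<chi> i. (b$i - a$i) / 2 * x$i + (a$i + b$i) / 2) = (\<Sum>\<alpha>\<in>A. d \<alpha> * cheb_prod \<alpha> x)"
    using assms(1) unfolding fun_span_def by blast
  define u where "u = (\<chi> i. (2 * x$i - a$i - b$i) / (b$i - a$i))"
  have ab: "b$i - a$i > 0" "a$i \<le> x$i" "x$i \<le> b$i" for i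
    using assms(2,3) by (auto simp: mem_box_cart)
  have "(b$i - a$i) / 2 * u$i + (a$i + b$i) / 2 = x$i" for i
    using ab(1)[of i] by (simp add: u_def field_simps)
  then have x_eq: "(\<chi> i. (b$i - a$i) / 2 * u$i + (a$i + b$i) / 2) = x"
    by (simp add: vec_eq_iff)
  have "\<bar>u$i\<bar> \<le> 1" for i
    using ab[of i] by (simp add: u_def abs_le_iff divide_le_eq le_divide_eq)
  then have cheb_prod_u: "\<bar>cheb_prod \<alpha> u\<bar> \<le> 1" for \<alpha>
    unfolding cheb_prod_def abs_prod by (intro prod_le_1) (auto simp: abs_cheb_le_1)
  have "\<bar>f x\<bar> = \<bar>\<Sum>\<alpha>\<in>A. d \<alpha> * cheb_prod \<alpha> u\<bar>" using A(2)[of u] x_eq by simp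
  also have "\<dots> \<le> (\<Sum>\<alpha>\<in>A. \<bar>d \<alpha>\<bar> * \<bar>cheb_prod \<alpha> u\<bar>)"
    by (rule sum_abs[THEN order_trans]) (simp add: abs_mult)
  also have "\<dots> \<le> (\<Sum>\<alpha>\<in>A. \<bar>d \<alpha>\<bar>)" by (intro sum_mono) (simp add: mult_left_le[OF cheb_prod_u])
  also have "\<dots> = tnorm a b f" using tnorm_eqI[OF A] by simp
  finally show ?thesis .
qed

lemma cheb_prod_upd:
  "cheb_prod (\<alpha>(j := k)) x = cheb k (x$j) * (\<Prod>i\<in>-{j}. cheb (\<alpha> i) (x$i))"
  unfolding cheb_prod_def Compl_eq_Diff_UNIV
  by (subst prod.remove[of _ j]) (auto intro!: prod.cong)

lemma cheb_prod_remove: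
  "cheb_prod \<alpha> x = cheb (\<alpha> j) (x$j) * (\<Prod>i\<in>-{j}. cheb (\<alpha> i) (x$i))"
  using cheb_prod_upd[of \<alpha> j "\<alpha> j" x] by simp

lemma fun_span_cheb_prod_coord_mult:
  assumes "f \<in> fun_span cheb_prod"
  shows "(\<lambda>x. x$j * f x) \<in> fun_span cheb_prod"
proof -
  obtain A d where A: "finite A" "\<And>x. f x = (\<Sum>\<alpha>\<in>A. d \<alpha> * cheb_prod \<alpha> x)"
    using assms unfolding fun_span_def by blast
  have "(\<lambda>x. d \<alpha> * (x$j * cheb_prod \<alpha> x)) \<in> fun_span cheb_prod" for \<alpha>
  proof (cases "\<alpha> j")
    case 0
    then have "x$j * cheb_prod \<alpha> x = cheb_prod (\<alpha>(j := 1)) x" for x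
      using cheb_prod_remove[of \<alpha> x j] cheb_prod_upd[of \<alpha> j 1 x] by simp
    then show ?thesis using fun_span_basis[of "d \<alpha>" cheb_prod "\<alpha>(j := 1)"] by simp
  next
    case (Suc m)
    then have "x$j * cheb_prod \<alpha> x
        = (cheb_prod (\<alpha>(j := Suc (Suc m))) x + cheb_prod (\<alpha>(j := m)) x) / 2" for x
      using cheb_prod_remove[of \<alpha> x j] cheb_prod_upd[of \<alpha> j "Suc (Suc m)" x]
        cheb_prod_upd[of \<alpha> j m x] x_mult_cheb_Suc[of "x$j" m]
      by (simp add: field_simps)
    then have "(\<lambda>x. d \<alpha> * (x$j * cheb_prod \<alpha> x))
        = (\<lambda>x. d \<alpha> / 2 * cheb_prod (\<alpha>(j := Suc (Suc m))) x + d \<alpha> / 2 * cheb_prod (\<alpha>(j := m)) x)"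
      by (simp add: fun_eq_iff add_divide_distrib distrib_left)
    then show ?thesis by (simp only:) (intro fun_span_add fun_span_basis)
  qed
  then have "(\<lambda>x. \<Sum>\<alpha>\<in>A. d \<alpha> * (x$j * cheb_prod \<alpha> x)) \<in> fun_span cheb_prod"
    by (intro fun_span_sum A(1))
  then show ?thesis by (simp add: A(2) sum_distrib_left mult_ac)
qed

lemma fun_span_cheb_prod_affine_monomial:
  assumes "f \<in> fun_span cheb_prod"
  shows "(\<lambda>x. (\<Prod>i\<in>I. (s i * x$i + t i) ^ k i) * f x) \<in> fun_span cheb_prod"
proof -
  have power: "(\<lambda>x. (s i * x$i + t i) ^ m * g x) \<in> fun_span cheb_prod"
    if "g \<in> fun_span cheb_prod" for g i m
  proof (induction m)
    case (Suc m)
    then have "(\<lambda>x. s i * (x$i * ((s i * x$i + t i) ^ m * g x)) + t i * ((s i * x$i + t i) ^ m * g x))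
        \<in> fun_span cheb_prod"
      by (intro fun_span_add fun_span_scale fun_span_cheb_prod_coord_mult)
    then show ?case by (simp add: algebra_simps)
  qed (simp add: that)
  have "finite I" by simp
  then show ?thesis
  proof (induction I rule: finite_induct)
    case (insert i I)
    then show ?case using power[of _ i "k i"] by (simp add: mult.assoc)
  qed (simp add: assms)
qed

section \<open>Polynomials in several variables\<close>

definition monomial_fun :: "('n \<Rightarrow> nat) \<Rightarrow> real^'n \<Rightarrow> real" where
  "monomial_fun \<alpha> x = (\<Prod>i\<in>UNIV. (x$i) ^ \<alpha> i)"

lemma is_mpoly_iff_fun_span: "is_mpoly f \<longleftrightarrow> f \<in> fun_span monomial_fun"
  unfolding is_mpoly_def fun_span_def monomial_fun_def by simp

lemma mpoly_affine_in_cheb_span: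
  assumes "is_mpoly P"
  shows "(\<lambda>x. P (\<chi> i. s i * x$i + t i)) \<in> fun_span cheb_prod"
proof -
  obtain A c where A: "finite A" "\<And>x. P x = (\<Sum>\<alpha>\<in>A. c \<alpha> * monomial_fun \<alpha> x)"
    using assms unfolding is_mpoly_iff_fun_span fun_span_def by blast
  have one: "(\<lambda>x. 1) \<in> fun_span cheb_prod"
    using fun_span_basis[of 1 cheb_prod "\<lambda>_. 0"] by (simp add: cheb_prod_def)
  have "(\<lambda>x. \<Sum>\<alpha>\<in>A. c \<alpha> * ((\<Prod>i\<in>UNIV. (s i * x$i + t i) ^ \<alpha> i) * 1)) \<in> fun_span cheb_prod"
    by (intro fun_span_sum A(1) fun_span_scale fun_span_cheb_prod_affine_monomial one)
  then show ?thesis by (simp add: A(2) monomial_fun_def)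
qed

lemma mpoly_mult:
  assumes "is_mpoly f" "is_mpoly g"
  shows "is_mpoly (\<lambda>x. f x * g x)"
proof -
  obtain A c where A: "finite A" "\<And>x. f x = (\<Sum>\<alpha>\<in>A. c \<alpha> * monomial_fun \<alpha> x)"
    using assms(1) unfolding is_mpoly_iff_fun_span fun_span_def by blast
  obtain B d where B: "finite B" "\<And>x. g x = (\<Sum>\<beta>\<in>B. d \<beta> * monomial_fun \<beta> x)"
    using assms(2) unfolding is_mpoly_iff_fun_span fun_span_def by blast
  have monomial_mult: "monomial_fun (\<lambda>i. \<alpha> i + \<beta> i) x = monomial_fun \<alpha> x * monomial_fun \<beta> x"
    for \<alpha> \<beta> x
    unfolding monomial_fun_def by (simp add: prod.distrib power_add)
  have "f x * g x = (\<Sum>\<alpha>\<in>A. \<Sum>\<beta>\<in>B. (c \<alpha> * d \<beta>) * monomial_fun (\<lambda>i. \<alpha> i + \<beta> i) x)" for x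
    unfolding A(2) B(2) sum_product monomial_mult by (intro sum.cong refl) (simp add: algebra_simps)
  moreover have "(\<lambda>x. \<Sum>\<alpha>\<in>A. \<Sum>\<beta>\<in>B. (c \<alpha> * d \<beta>) * monomial_fun (\<lambda>i. \<alpha> i + \<beta> i) x)
      \<in> fun_span monomial_fun"
    by (intro fun_span_sum A(1) B(1) fun_span_basis)
  ultimately show ?thesis unfolding is_mpoly_iff_fun_span by simp
qed

lemma mpoly_diff: "is_mpoly f \<Longrightarrow> is_mpoly g \<Longrightarrow> is_mpoly (\<lambda>x. f x - g x)"
  unfolding is_mpoly_iff_fun_span by (rule fun_span_diff)

lemma monomial_fun_upd:
  "monomial_fun (\<alpha>(j := k)) x = (x$j) ^ k * (\<Prod>i\<in>-{j}. (x$i) ^ \<alpha> i)"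
  unfolding monomial_fun_def Compl_eq_Diff_UNIV
  by (subst prod.remove[of _ j]) (auto intro!: prod.cong)

lemma mpoly_partial:
  fixes p :: "real^'n \<Rightarrow> real"
  assumes "is_mpoly p"
  shows "is_mpoly (partial j p)"
proof -
  obtain A c where A: "finite A" "\<And>x. p x = (\<Sum>\<alpha>\<in>A. c \<alpha> * monomial_fun \<alpha> x)"
    using assms unfolding is_mpoly_iff_fun_span fun_span_def by blast
  define R where "R \<alpha> x = (\<Prod>i\<in>-{j}. (x$i) ^ \<alpha> i)" for \<alpha> and x :: "real^'n"
  have "partial j p = (\<lambda>x. \<Sum>\<alpha>\<in>A. (c \<alpha> * real (\<alpha> j)) * monomial_fun (\<alpha>(j := \<alpha> j - 1)) x)"
  proof
    fix x
    have "R \<alpha> (\<chi> i. if i = j then t else x$i) = R \<alpha> x" for \<alpha> t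
      unfolding R_def by (intro prod.cong) auto
    then have "monomial_fun \<alpha> (\<chi> i. if i = j then t else x$i) = t ^ \<alpha> j * R \<alpha> x" for \<alpha> t
      using monomial_fun_upd[of \<alpha> j "\<alpha> j" "\<chi> i. if i = j then t else x$i"] by (simp add: R_def)
    then have line: "p (\<chi> i. if i = j then t else x$i) = (\<Sum>\<alpha>\<in>A. c \<alpha> * (t ^ \<alpha> j * R \<alpha> x))" for t
      unfolding A(2) by simp
    have "((\<lambda>t. \<Sum>\<alpha>\<in>A. c \<alpha> * (t ^ \<alpha> j * R \<alpha> x)) has_field_derivative
        (\<Sum>\<alpha>\<in>A. c \<alpha> * (real (\<alpha> j) * (x$j) ^ (\<alpha> j - Suc 0) * R \<alpha> x))) (at (x$j))"
      by (intro DERIV_sum DERIV_cmult DERIV_cmult_right DERIV_pow)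
    then have "partial j p x = (\<Sum>\<alpha>\<in>A. c \<alpha> * (real (\<alpha> j) * (x$j) ^ (\<alpha> j - Suc 0) * R \<alpha> x))"
      unfolding partial_def line by (rule DERIV_imp_deriv)
    then show "partial j p x
        = (\<Sum>\<alpha>\<in>A. (c \<alpha> * real (\<alpha> j)) * monomial_fun (\<alpha>(j := \<alpha> j - 1)) x)"
      by (simp add: monomial_fun_upd R_def mult_ac)
  qed
  moreover have "(\<lambda>x. \<Sum>\<alpha>\<in>A. (c \<alpha> * real (\<alpha> j)) * monomial_fun (\<alpha>(j := \<alpha> j - 1)) x)
      \<in> fun_span monomial_fun"
    by (intro fun_span_sum A(1) fun_span_basis)
  ultimately show ?thesis unfolding is_mpoly_iff_fun_span by simp
qed

lemma monomial_fun_differentiable: "monomial_fun \<alpha> differentiable (at x)"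
  unfolding monomial_fun_def differentiable_def
  by (rule exI, rule has_derivative_prod, rule has_derivative_power,
      rule bounded_linear_imp_has_derivative) (rule bounded_linear_vec_nth)

lemma mpoly_differentiable:
  fixes p :: "real^'n \<Rightarrow> real"
  assumes "is_mpoly p"
  shows "p differentiable (at x)"
proof -
  obtain A c where A: "finite A" "\<And>x. p x = (\<Sum>\<alpha>\<in>A. c \<alpha> * monomial_fun \<alpha> x)"
    using assms unfolding is_mpoly_iff_fun_span fun_span_def by blast
  have "p = (\<lambda>x. \<Sum>\<alpha>\<in>A. c \<alpha> * monomial_fun \<alpha> x)"
    using A(2) by (rule ext)
  moreover have "(\<lambda>x. \<Sum>\<alpha>\<in>A. c \<alpha> * monomial_fun \<alpha> x) differentiable (at x)"
    by (intro differentiable_sum A(1) ballI differentiable_mult differentiable_const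
        monomial_fun_differentiable)
  ultimately show ?thesis by simp
qed

lemma partial_eq_derivative:
  assumes "(p has_derivative D) (at x)"
  shows "partial j p x = D (axis j 1)"
proof -
  define l where "l t = x + (t - x$j) *\<^sub>R axis j 1" for t :: real
  have "(l has_derivative (\<lambda>s. s *\<^sub>R axis j 1)) (at (x$j))"
    unfolding l_def by (auto intro!: derivative_eq_intros)
  moreover have "l (x$j) = x" by (simp add: l_def)
  ultimately have "((p \<circ> l) has_derivative (\<lambda>s. D (s *\<^sub>R axis j 1))) (at (x$j))"
    using diff_chain_at[of l _ "x$j" p D] assms by (simp add: o_def)
  moreover have "(\<lambda>s. D (s *\<^sub>R axis j 1)) = (\<lambda>s. D (axis j 1) * s)"
    using linear_scale[OF has_derivative_linear[OF assms]] by (auto simp: fun_eq_iff)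
  moreover have "p \<circ> l = (\<lambda>t. p (\<chi> i. if i = j then t else x$i))"
    by (auto simp: fun_eq_iff l_def vec_eq_iff axis_def intro!: arg_cong[where f = p])
  ultimately show ?thesis
    unfolding partial_def by (intro DERIV_imp_deriv) (simp add: has_field_derivative_def)
qed

section \<open>Mean value estimate for quotients\<close>

lemma has_derivative_eq_sum_partial:
  fixes p :: "real^'n \<Rightarrow> real"
  assumes "(p has_derivative D) (at x)"
  shows "D v = (\<Sum>j\<in>UNIV. v$j * partial j p x)"
proof -
  have "D v = D (\<Sum>j\<in>UNIV. v$j *\<^sub>R axis j 1)"
    using basis_expansion[of v] by (simp add: scalar_mult_eq_scaleR)
  also have "\<dots> = (\<Sum>j\<in>UNIV. v$j * D (axis j 1))"
    using has_derivative_linear[OF assms] by (simp add: linear_sum linear_scale)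
  finally show ?thesis by (simp add: partial_eq_derivative[OF assms])
qed

lemma convex_mvt_real:
  fixes f :: "'a::real_normed_vector \<Rightarrow> real"
  assumes "convex S" "x \<in> S" "y \<in> S" and deriv: "\<And>z. z \<in> S \<Longrightarrow> (f has_derivative D z) (at z)"
  shows "\<exists>z\<in>S. \<bar>f x - f y\<bar> \<le> \<bar>D z (x - y)\<bar>"
proof -
  define l where "l t = y + t *\<^sub>R (x - y)" for t :: real
  have l_in: "l t \<in> S" if "t \<in> {0..1}" for t
  proof -
    have "(1 - t) *\<^sub>R y + t *\<^sub>R x \<in> S" using assms(1-3) that by (auto simp: convex_alt)
    then show ?thesis by (simp add: l_def algebra_simps)
  qed
  have l': "(l has_derivative (\<lambda>s. s *\<^sub>R (x - y))) (at t)" for t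
    unfolding l_def by (auto intro!: derivative_eq_intros)
  have fl: "((f \<circ> l) has_derivative (\<lambda>s. D (l t) (s *\<^sub>R (x - y)))) (at t)" if "t \<in> {0..1}" for t
    using diff_chain_at[OF l' deriv[OF l_in[OF that]]] by (simp add: comp_def)
  then have "continuous_on {0..1} (f \<circ> l)"
    by (intro continuous_at_imp_continuous_on ballI has_derivative_continuous) auto
  then obtain t where "t \<in> {0<..<1}"
    "norm ((f \<circ> l) 1 - (f \<circ> l) 0) \<le> norm (D (l t) ((1 - 0) *\<^sub>R (x - y)))"
    using mvt_general[of 0 1 "f \<circ> l" "\<lambda>t s. D (l t) (s *\<^sub>R (x - y))"] fl by force
  moreover have "l 1 = x" "l 0 = y" by (simp_all add: l_def)
  ultimately show ?thesis using l_in[of t] by (intro bexI[of _ "l t"]) auto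
qed

lemma abs_quotient_diff_le:
  fixes p q :: "real^'n \<Rightarrow> real"
  assumes "is_mpoly p" "is_mpoly q" "0 < m"
    and q_sq: "\<And>z. z \<in> cbox a b \<Longrightarrow> m \<le> (q z)^2"
    and F_le: "\<And>j z. z \<in> cbox a b \<Longrightarrow> \<bar>partial j p z * q z - p z * partial j q z\<bar> \<le> K j"
    and "x \<in> cbox a b" "y \<in> cbox a b"
  shows "\<bar>p x / q x - p y / q y\<bar> \<le> (\<Sum>j\<in>UNIV. \<bar>x$j - y$j\<bar> * K j) / m"
proof -
  define Dp where "Dp z = frechet_derivative p (at z)" for z
  define Dq where "Dq z = frechet_derivative q (at z)" for z
  have Dp: "(p has_derivative Dp z) (at z)" and Dq: "(q has_derivative Dq z) (at z)" for z
    unfolding Dp_def Dq_def using mpoly_differentiable assms(1,2) frechet_derivative_works by blast+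
  have "((\<lambda>w. p w / q w) has_derivative (\<lambda>v. (Dp z v * q z - p z * Dq z v) / (q z)^2)) (at z)"
    if "z \<in> cbox a b" for z
  proof -
    have "q z \<noteq> 0" using q_sq[OF that] \<open>0 < m\<close> by auto
    then show ?thesis
      using has_derivative_divide[OF Dp Dq]
      by (auto simp: fun_eq_iff field_simps power2_eq_square elim!: has_derivative_transform)
  qed
  then obtain z where z: "z \<in> cbox a b"
    and mvt: "\<bar>p x / q x - p y / q y\<bar> \<le> \<bar>(Dp z (x - y) * q z - p z * Dq z (x - y)) / (q z)^2\<bar>"
    using convex_mvt_real[OF convex_box(1) assms(6,7), of "\<lambda>w. p w / q w"
        "\<lambda>z v. (Dp z v * q z - p z * Dq z v) / (q z)^2"] by auto
  have "Dp z (x - y) * q z - p z * Dq z (x - y)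
      = (\<Sum>j\<in>UNIV. (x$j - y$j) * (partial j p z * q z - p z * partial j q z))"
    unfolding has_derivative_eq_sum_partial[OF Dp] has_derivative_eq_sum_partial[OF Dq]
      sum_distrib_left sum_distrib_right sum_subtractf[symmetric]
    by (intro sum.cong) (simp_all add: algebra_simps)
  also have "\<bar>\<dots>\<bar> \<le> (\<Sum>j\<in>UNIV. \<bar>x$j - y$j\<bar> * K j)"
    by (rule order_trans[OF sum_abs sum_mono]) (simp add: abs_mult mult_left_mono F_le[OF z])
  finally have "\<bar>Dp z (x - y) * q z - p z * Dq z (x - y)\<bar> \<le> (\<Sum>j\<in>UNIV. \<bar>x$j - y$j\<bar> * K j)" .
  then have "\<bar>(Dp z (x - y) * q z - p z * Dq z (x - y)) / (q z)^2\<bar>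
      \<le> (\<Sum>j\<in>UNIV. \<bar>x$j - y$j\<bar> * K j) / m"
    using q_sq[OF z] \<open>0 < m\<close> by (simp add: frac_le)
  with mvt show ?thesis by linarith
qed

section \<open>The grid\<close>

definition box_grid :: "real^'n \<Rightarrow> real^'n \<Rightarrow> ('n \<Rightarrow> nat) \<Rightarrow> (real^'n) set" where
  "box_grid a b M = (\<lambda>k. \<chi> j. a$j + (b$j - a$j) / real (M j) * real (k j)) ` {k. \<forall>j. k j \<le> M j}"

lemma grid_eq_box_grid: "grid a b eps p q = box_grid a b (gridM a b eps p q)"
  unfolding grid_def box_grid_def by auto

lemma finite_box_grid: "finite (box_grid a b M)"
proof -
  have "{k. \<forall>j. k j \<le> M j} = PiE UNIV (\<lambda>j. {..M j})"
    by (auto simp: PiE_UNIV_domain Pi_def)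
  then show ?thesis unfolding box_grid_def by (simp add: finite_PiE)
qed

lemma box_grid_nonempty: "box_grid a b M \<noteq> {}"
  unfolding box_grid_def by auto

lemma box_grid_subset_cbox:
  assumes "\<forall>j. a$j \<le> b$j"
  shows "box_grid a b M \<subseteq> cbox a b"
proof
  fix y assume "y \<in> box_grid a b M"
  then obtain k where k: "\<forall>j. k j \<le> M j"
    and y: "y = (\<chi> j. a$j + (b$j - a$j) / real (M j) * real (k j))"
    unfolding box_grid_def by blast
  have bounds: "0 \<le> (b$j - a$j) / real (M j) * real (k j)
      \<and> (b$j - a$j) / real (M j) * real (k j) \<le> b$j - a$j"
    for j
  proof (cases "M j = 0")
    case False
    have "(b$j - a$j) / real (M j) * real (k j) \<le> (b$j - a$j) / real (M j) * real (M j)"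
      using assms k by (intro mult_left_mono) auto
    with False assms show ?thesis by simp
  qed (use assms in simp)
  show "y \<in> cbox a b"
    unfolding y mem_box_cart using bounds by (simp add: add.commute le_diff_eq)
qed

lemma box_grid_cover:
  assumes "\<forall>j. a$j < b$j" "\<forall>j. 0 < M j" "x \<in> cbox a b"
  shows "\<exists>y\<in>box_grid a b M. \<forall>j. \<bar>x$j - y$j\<bar> \<le> (b$j - a$j) / real (M j)"
proof -
  define h where "h j = (b$j - a$j) / real (M j)" for j
  define k where "k j = nat \<lfloor>(x$j - a$j) / h j\<rfloor>" for j
  have "k j \<le> M j \<and> \<bar>x$j - (a$j + h j * real (k j))\<bar> \<le> h j" for j
  proof -
    have h: "0 < h j" using assms(1,2) by (simp add: h_def)
    have x: "a$j \<le> x$j" "x$j \<le> b$j" using assms(3) by (auto simp: mem_box_cart)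
    define u where "u = (x$j - a$j) / h j"
    have hM: "h j * real (M j) = b$j - a$j" using assms(2) by (simp add: h_def)
    have u: "0 \<le> u" "u \<le> real (M j)" "h j * u = x$j - a$j"
      using h x hM by (simp_all add: u_def divide_le_eq mult.commute)
    have "real (k j) = of_int \<lfloor>u\<rfloor>" using u(1) by (simp add: k_def u_def)
    then have "real (k j) \<le> u" "u < real (k j) + 1" "real (k j) \<le> real (M j)"
      using u(2) by linarith+
    then have "h j * real (k j) \<le> h j * u" "h j * u \<le> h j * (real (k j) + 1)" "k j \<le> M j"
      using h by simp_all
    with u(3) show ?thesis by (simp add: algebra_simps abs_le_iff)
  qed
  moreover have "(\<chi> j. a$j + h j * real (k j)) \<in> box_grid a b M"
    using calculation unfolding box_grid_def h_def by auto
  ultimately show ?thesis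
    by (intro bexI[of _ "\<chi> j. a$j + h j * real (k j)"]) (auto simp: h_def)
qed

lemma gridM_ge:
  fixes a b :: "real^'n" and p q :: "real^'n \<Rightarrow> real"
  shows "1 \<le> gridM a b eps p q j"
  "real CARD('n) / eps * (b$j - a$j) * tnorm a b (\<lambda>x. partial j p x * q x - p x * partial j q x)
     \<le> real (gridM a b eps p q j)"
proof -
  let ?R = "real CARD('n) / eps * (b$j - a$j) * tnorm a b (\<lambda>x. partial j p x * q x - p x * partial j q x)"
  have "\<exists>m::nat. 1 \<le> m \<and> ?R \<le> real m"
    by (rule exI[of _ "Suc (nat \<lceil>?R\<rceil>)"]) linarith
  from LeastI_ex[OF this] show "1 \<le> gridM a b eps p q j" "?R \<le> real (gridM a b eps p q j)"
    unfolding gridM_def by simp_all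
qed

lemma gridM_mesh:
  fixes a b :: "real^'n" and p q :: "real^'n \<Rightarrow> real"
  assumes "0 < eps"
  shows "(b$j - a$j) / real (gridM a b eps p q j)
      * tnorm a b (\<lambda>x. partial j p x * q x - p x * partial j q x)
    \<le> eps / real CARD('n)"
  using gridM_ge[where a = a and b = b and eps = eps and p = p and q = q and j = j] assms
  by (simp add: field_simps)

section \<open>Extrema over a dense finite subset\<close>

lemma Min_Max_approx_INF_SUP:
  fixes g :: "'a \<Rightarrow> real"
  assumes "G \<subseteq> S" "finite G" "G \<noteq> {}" and near: "\<forall>x\<in>S. \<exists>y\<in>G. \<bar>g x - g y\<bar> \<le> \<delta>"
  shows "\<bar>Min (g ` G) - (INF x\<in>S. g x)\<bar> \<le> \<delta> \<and> \<bar>Max (g ` G) - (SUP x\<in>S. g x)\<bar> \<le> \<delta>"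
proof -
  have fin: "finite (g ` G)" "g ` G \<noteq> {}" using assms(2,3) by auto
  obtain y0 where y0: "y0 \<in> G" "Min (g ` G) = g y0" using Min_in[OF fin] by auto
  obtain y1 where y1: "y1 \<in> G" "Max (g ` G) = g y1" using Max_in[OF fin] by auto
  have lower: "Min (g ` G) - \<delta> \<le> g x" and upper: "g x \<le> Max (g ` G) + \<delta>" if x: "x \<in> S" for x
  proof -
    obtain y where "y \<in> G" "\<bar>g x - g y\<bar> \<le> \<delta>" using near x by auto
    moreover have "Min (g ` G) \<le> g y" "g y \<le> Max (g ` G)" using fin \<open>y \<in> G\<close> by simp_all
    ultimately show "Min (g ` G) - \<delta> \<le> g x" "g x \<le> Max (g ` G) + \<delta>" by linarith+
  qed
  have "bdd_below (g ` S)" "bdd_above (g ` S)"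
    using bdd_belowI2[OF lower] bdd_aboveI2[OF upper] by auto
  then have "(INF x\<in>S. g x) \<le> g y0" "g y1 \<le> (SUP x\<in>S. g x)"
    using assms(1) y0(1) y1(1) by (auto intro: cINF_lower cSUP_upper)
  moreover have "Min (g ` G) - \<delta> \<le> (INF x\<in>S. g x)" "(SUP x\<in>S. g x) \<le> Max (g ` G) + \<delta>"
    using assms(1,3) lower upper by (auto intro: cINF_greatest cSUP_least)
  ultimately show ?thesis using y0 y1 by (simp add: abs_le_iff)
qed

lemma INF_square_pos:
  fixes g :: "'a \<Rightarrow> real"
  assumes "S \<noteq> {}" "0 < (INF x\<in>S. \<bar>g x\<bar>)"
  shows "0 < (INF x\<in>S. (g x)^2)"
proof -
  have "(INF x\<in>S. \<bar>g x\<bar>) \<le> \<bar>g x\<bar>" if "x \<in> S" for x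
    using that by (intro cINF_lower) (auto intro: bdd_belowI2[of _ 0])
  then have "(INF x\<in>S. \<bar>g x\<bar>)^2 \<le> (g x)^2" if "x \<in> S" for x
    using power_mono[OF _ less_imp_le[OF assms(2)], of "\<bar>g x\<bar>" 2] that by simp
  then have "(INF x\<in>S. \<bar>g x\<bar>)^2 \<le> (INF x\<in>S. (g x)^2)"
    using assms(1) by (intro cINF_greatest) auto
  then show ?thesis using zero_less_power[OF assms(2), of 2] by linarith
qed

lemma quotient_grid_approx:
  fixes p q :: "real^'n \<Rightarrow> real"
  assumes "is_mpoly p" "is_mpoly q" "0 < eps" "\<forall>j. a$j < b$j"
    and "0 < m" "\<And>z. z \<in> cbox a b \<Longrightarrow> m \<le> (q z)^2"
    and x: "x \<in> cbox a b"
  shows "\<exists>y\<in>grid a b eps p q. \<bar>p x / q x - p y / q y\<bar> \<le> eps / m"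
proof -
  define K where "K j = tnorm a b (\<lambda>z. partial j p z * q z - p z * partial j q z)" for j
  have K: "\<bar>partial j p z * q z - p z * partial j q z\<bar> \<le> K j" if "z \<in> cbox a b" for j z
    unfolding K_def
    by (intro abs_le_tnorm[OF mpoly_affine_in_cheb_span assms(4) that] mpoly_diff mpoly_mult
        mpoly_partial assms(1,2))
  have "\<forall>j. 0 < gridM a b eps p q j" using less_le_trans[OF zero_less_one gridM_ge(1)] by blast
  then obtain y where y: "y \<in> grid a b eps p q"
    and close: "\<And>j. \<bar>x$j - y$j\<bar> \<le> (b$j - a$j) / real (gridM a b eps p q j)"
    using box_grid_cover[OF assms(4) _ x] unfolding grid_eq_box_grid by blast
  have "\<bar>x$j - y$j\<bar> * K j \<le> eps / real CARD('n)" for j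
  proof -
    have "0 \<le> K j" using K[OF x, of j] by linarith
    then have "\<bar>x$j - y$j\<bar> * K j \<le> (b$j - a$j) / real (gridM a b eps p q j) * K j"
      by (rule mult_right_mono[OF close])
    also have "\<dots> \<le> eps / real CARD('n)"
      unfolding K_def by (rule gridM_mesh[OF assms(3)])
    finally show ?thesis .
  qed
  then have sum_le: "(\<Sum>j\<in>UNIV. \<bar>x$j - y$j\<bar> * K j) \<le> eps"
    using sum_mono[of UNIV "\<lambda>j. \<bar>x$j - y$j\<bar> * K j" "\<lambda>_. eps / real CARD('n)"] by simp
  have y_box: "y \<in> cbox a b"
    using y box_grid_subset_cbox[of a b] assms(4) unfolding grid_eq_box_grid
    by (auto simp: less_imp_le)
  have "\<bar>p x / q x - p y / q y\<bar> \<le> (\<Sum>j\<in>UNIV. \<bar>x$j - y$j\<bar> * K j) / m"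
    by (rule abs_quotient_diff_le[OF assms(1,2,5,6) K x y_box])
  also have "\<dots> \<le> eps / m"
    using sum_le \<open>0 < m\<close> by (simp add: divide_right_mono)
  finally show ?thesis using y by blast
qed

theorem lemma5p22:
  fixes p q :: "real^'n \<Rightarrow> real" and a b :: "real^'n" and eps :: real
  assumes "is_mpoly p" and "is_mpoly q" and "eps > 0"
    and "\<forall>j. a$j < b$j"
    and "(INF x\<in>cbox a b. \<bar>q x\<bar>) > 0"
  shows "\<bar>min_eps a b eps p q - (INF x\<in>cbox a b. p x / q x)\<bar> \<le> eps / (INF x\<in>cbox a b. (q x)^2) \<and>
         \<bar>max_eps a b eps p q - (SUP x\<in>cbox a b. p x / q x)\<bar> \<le> eps / (INF x\<in>cbox a b. (q x)^2) \<and>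
         \<bar>linf_eps a b eps p q - (SUP x\<in>cbox a b. \<bar>p x / q x\<bar>)\<bar> \<le> eps / (INF x\<in>cbox a b. (q x)^2)"
proof -
  let ?G = "grid a b eps p q" and ?m = "INF x\<in>cbox a b. (q x)^2"
  have "a \<in> cbox a b" using assms(4) by (auto simp: mem_box_cart less_imp_le)
  then have m_pos: "0 < ?m" using INF_square_pos assms(5) by blast
  have m_le: "?m \<le> (q z)^2" if "z \<in> cbox a b" for z
    using that by (intro cINF_lower) (auto intro: bdd_belowI2[of _ 0])
  have "\<forall>j. a$j \<le> b$j" using assms(4) by (simp add: less_imp_le)
  then have G: "?G \<subseteq> cbox a b" "finite ?G" "?G \<noteq> {}"
    unfolding grid_eq_box_grid
    by (simp_all add: box_grid_subset_cbox finite_box_grid box_grid_nonempty)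
  have near: "\<forall>x\<in>cbox a b. \<exists>y\<in>?G. \<bar>p x / q x - p y / q y\<bar> \<le> eps / ?m"
    using quotient_grid_approx[OF assms(1-4) m_pos m_le] by blast
  then have near_abs: "\<forall>x\<in>cbox a b. \<exists>y\<in>?G. \<bar>\<bar>p x / q x\<bar> - \<bar>p y / q y\<bar>\<bar> \<le> eps / ?m"
    by (blast intro: order_trans[OF abs_triangle_ineq3])
  show ?thesis
    using Min_Max_approx_INF_SUP[OF G near] Min_Max_approx_INF_SUP[OF G near_abs]
    unfolding min_eps_def max_eps_def linf_eps_def by blast
qed

end
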